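(* Let $X\subset\operatorname{Hol}(\mathbb{D})$ be a Banach space such that (X1) for each $w\in\mathbb{D}$ the map $f\mapsto f(w)$, $X\to\mathbb{C}$, is continuous; (X2) $X$ contains the polynomials and they are dense in $X$; (X3) if $f\in X$ then $zf\in X$. Let $Y\subset X$ be a set such that (Y1) if $g\in X$ and $0<\inf_{\mathbb{D}}|g|\le\sup_{\mathbb{D}}|g|<\infty$, then $g\in Y$; (Y2) for every $\lambda\in\mathbb{T}$, the function $g(z):=z-\lambda$ belongs to $Y$. Let $T:X\to\operatorname{Hol}(\mathbb{D})$ be a continuous linear map such that $(Tg)(z)\neq0$ for all $g\in Y$ and all $z\in\mathbb{D}$. Then there exist holomorphic functions $\phi:\mathbb{D}\to\mathbb{D}$ and $\psi:\mathbb{D}\to\mathbb{C}\setminus\{0\}$ such that \[ Tf=\psi\cdot(f\circ\phi)\qquad(f\in X). \]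
   Context: $\mathbb{D}$ is the open unit disk, $\mathbb{T}$ the unit circle, and $\operatorname{Hol}(\mathbb{D})$ the space of holomorphic functions on $\mathbb{D}$, endowed with its usual Fréchet-space topology (uniform convergence on compact subsets of $\mathbb{D}$); continuity of $T$ refers to the norm topology on $X$ and this topology on $\operatorname{Hol}(\mathbb{D})$. *)

theory Defs
  imports "HOL-Analysis.Analysis" "HOL-Computational_Algebra.Polynomial"
begin

text \<open>Elements of Hol(D) are represented canonically by functions complex => complex that
are holomorphic on the open unit disk and vanish outside it.\<close>

definition hol_disk :: "(complex \<Rightarrow> complex) set" where
  "hol_disk = {f. f holomorphic_on ball 0 1 \<and> (\<forall>z. z \<notin> ball 0 1 \<longrightarrow> f z = 0)}"

definition restrD :: "(complex \<Rightarrow> complex) \<Rightarrow> complex \<Rightarrow> complex" where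
  "restrD f = (\<lambda>z. if z \<in> ball 0 1 then f z else 0)"

definition banach_subspace_hol :: "(complex \<Rightarrow> complex) set \<Rightarrow> ((complex \<Rightarrow> complex) \<Rightarrow> real) \<Rightarrow> bool" where
  "banach_subspace_hol X N \<longleftrightarrow>
     X \<subseteq> hol_disk \<and>
     (\<lambda>z. 0) \<in> X \<and>
     (\<forall>f\<in>X. \<forall>g\<in>X. (\<lambda>z. f z + g z) \<in> X) \<and>
     (\<forall>f\<in>X. \<forall>c::complex. (\<lambda>z. c * f z) \<in> X) \<and>
     (\<forall>f\<in>X. N f \<ge> 0) \<and>
     (\<forall>f\<in>X. N f = 0 \<longleftrightarrow> f = (\<lambda>z. 0)) \<and>
     (\<forall>f\<in>X. \<forall>g\<in>X. N (\<lambda>z. f z + g z) \<le> N f + N g) \<and>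
     (\<forall>f\<in>X. \<forall>c::complex. N (\<lambda>z. c * f z) = cmod c * N f) \<and>
     (\<forall>s::nat \<Rightarrow> complex \<Rightarrow> complex. (\<forall>n. s n \<in> X) \<longrightarrow>
        (\<forall>e>0. \<exists>M. \<forall>m\<ge>M. \<forall>n\<ge>M. N (\<lambda>z. s m z - s n z) < e) \<longrightarrow>
        (\<exists>f\<in>X. (\<lambda>n. N (\<lambda>z. s n z - f z)) \<longlonglongrightarrow> 0))"

end

theory Submission
  imports Defs "HOL-Complex_Analysis.Complex_Analysis"
begin

(* For z in the disc, p \<mapsto> T (p) (z) / T (1) (z) is a linear functional L on polynomials that
   vanishes at no polynomial bounded away from 0 on the disc.  Hence |L p| lies between the inf and
   the sup of |p| on the disc, so the moments L (z^k) have modulus at most 1 and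
   F x = \<Sum>k. L (z^k) x^k / k!, formally L (exp (x z)), is an entire function with
   exp (-|x|) \<le> |F x| \<le> exp |x|.  Being zero-free of exponential type, F x = exp (b x) by the
   Borel-Caratheodory inequality and Liouville's theorem, hence L (z^k) = b^k: L is evaluation at
   b = \<phi> z.  Since T does not vanish at z - w for |w| \<ge> 1, b lies in the disc.  Continuity of
   T and of point evaluations carries T f = \<psi> (f \<circ> \<phi>) from the dense set of polynomials
   to all of X. *)

section \<open>Zero-free entire functions of exponential type\<close>

lemma Borel_Caratheodory:
  fixes g :: "complex \<Rightarrow> complex"
  assumes holg: "g holomorphic_on ball 0 R" and g0: "g 0 = 0"
    and Re_less: "\<And>w. w \<in> ball 0 R \<Longrightarrow> Re (g w) < M"
    and z: "z \<in> ball 0 R"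
  shows "cmod (g z) \<le> 2 * M * cmod z / (R - cmod z)"
proof -
  have zR: "cmod z < R"
    using z by simp
  hence R: "R > 0"
    using norm_ge_zero[of z] by linarith
  have M: "M > 0"
    using Re_less[of 0] R by (simp add: g0)
  have norm_less: "cmod a < cmod (2 * of_real M - a)" if "Re a < M" for a
  proof -
    have "(cmod (2 * of_real M - a))\<^sup>2 - (cmod a)\<^sup>2 = 4 * M * (M - Re a)"
      by (simp only: cmod_power2) (simp add: power2_eq_square algebra_simps)
    moreover have "4 * M * (M - Re a) > 0"
      using M that by simp
    ultimately have "(cmod a)\<^sup>2 < (cmod (2 * of_real M - a))\<^sup>2"
      by linarith
    thus ?thesis
      by (rule power2_less_imp_less) simp
  qed
  \<comment> \<open>w \<mapsto> w / (2 M - w) maps the half-plane Re w < M into the unit disc\<close>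
  define \<phi> where "\<phi> = (\<lambda>u. g (of_real R * u) / (2 * of_real M - g (of_real R * u)))"
  have in_ball: "of_real R * u \<in> ball 0 R" if "cmod u < 1" for u
    using R that by (simp add: norm_mult)
  have den: "2 * of_real M - g (of_real R * u) \<noteq> 0" if "cmod u < 1" for u
    using norm_less[OF Re_less[OF in_ball[OF that]]] by auto
  have "\<phi> holomorphic_on ball 0 1"
    unfolding \<phi>_def using den
    by (intro holomorphic_intros holomorphic_on_compose_gen[OF _ holg, unfolded o_def])
       (auto intro: in_ball)
  moreover have "cmod (\<phi> u) < 1" if "cmod u < 1" for u
    using norm_less[OF Re_less[OF in_ball[OF that]]] den[OF that]
    by (simp add: \<phi>_def norm_divide divide_less_eq)
  ultimately have "cmod (\<phi> (z / of_real R)) \<le> cmod (z / of_real R)"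
    using R zR by (intro Schwarz_Lemma(1)) (auto simp: \<phi>_def g0 norm_divide)
  hence "R * cmod (g z) \<le> cmod z * cmod (2 * of_real M - g z)"
    using R den[of "z / of_real R"] zR
    by (simp add: \<phi>_def norm_divide norm_mult field_simps)
  also have "\<dots> \<le> cmod z * (2 * M + cmod (g z))"
    using M norm_triangle_ineq4[of "2 * of_real M" "g z"]
    by (intro mult_left_mono) auto
  finally have "cmod (g z) * (R - cmod z) \<le> 2 * M * cmod z"
    by (simp add: algebra_simps)
  thus ?thesis
    using zR by (simp add: field_simps)
qed

lemma entire_Re_le_norm_imp_linear:
  fixes g :: "complex \<Rightarrow> complex"
  assumes holg: "g holomorphic_on UNIV" and g0: "g 0 = 0"
    and Re_le: "\<And>z. Re (g z) \<le> cmod z"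
  shows "g z = deriv g 0 * z"
proof -
  have "cmod (g z) \<le> 4 * cmod z" for z
  proof (cases "z = 0")
    case False
    have "Re (g w) < 2 * cmod z" if "w \<in> ball 0 (2 * cmod z)" for w
      using Re_le[of w] that by simp
    hence "cmod (g z) \<le> 2 * (2 * cmod z) * cmod z / (2 * cmod z - cmod z)"
      using False
      by (intro Borel_Caratheodory holomorphic_on_subset[OF holg] g0) auto
    thus ?thesis
      using False by simp
  qed (simp add: g0)
  hence "g z = (\<Sum>k\<le>1. (deriv ^^ k) g 0 / fact k * z ^ k)"
    by (intro Liouville_polynomial[OF holg, of 0 4]) auto
  thus ?thesis
    by (simp add: g0)
qed

lemma entire_nonzero_exponential_type_eq_exp_linear:
  fixes F :: "complex \<Rightarrow> complex"
  assumes holF: "F holomorphic_on UNIV" and F0: "F 0 = 1"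
    and nonzero: "\<And>x. F x \<noteq> 0" and growth: "\<And>x. cmod (F x) \<le> exp (cmod x)"
  obtains b where "\<And>x. F x = exp (b * x)"
proof -
  obtain h where holh: "h holomorphic_on UNIV" and F_exp: "\<And>z. z \<in> UNIV \<Longrightarrow> F z = exp (h z)"
    by (rule contractible_imp_holomorphic_log[OF holF contractible_UNIV]) (use nonzero in auto)
  define g where "g = (\<lambda>z. h z - h 0)"
  have F_eq: "F z = exp (g z)" for z
    using F_exp[of z] F_exp[of 0] F0 by (simp add: g_def exp_diff)
  have g_linear: "g z = deriv g 0 * z" for z
  proof (rule entire_Re_le_norm_imp_linear)
    show "g holomorphic_on UNIV"
      unfolding g_def by (intro holomorphic_intros holh)
    show "Re (g z) \<le> cmod z" for z
      using growth[of z] by (simp add: F_eq)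
  qed (simp add: g_def)
  show ?thesis
    by (rule that) (simp add: F_eq g_linear)
qed

section \<open>Zero-free linear functionals on polynomials\<close>

lemma norm_exp_minus_partial_sum_le:
  fixes x z :: complex
  assumes "cmod z \<le> 1"
  shows "cmod (exp (x * z) - (\<Sum>k<m. x ^ k / fact k * z ^ k))
           \<le> exp (cmod x) - (\<Sum>k<m. cmod x ^ k / fact k)"
proof -
  define f where "f = (\<lambda>k. (x * z) ^ k /\<^sub>R fact k)"
  define g where "g = (\<lambda>k. cmod x ^ k /\<^sub>R fact k)"
  have "(\<lambda>k. f (k + m)) sums (exp (x * z) - (\<Sum>k<m. f k))"
    unfolding f_def by (rule sums_split_initial_segment[OF exp_converges])
  moreover have "(\<lambda>k. g (k + m)) sums (exp (cmod x) - (\<Sum>k<m. g k))"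
    unfolding g_def by (rule sums_split_initial_segment[OF exp_converges])
  moreover have "norm (f k) \<le> g k" for k
  proof -
    have "norm (f k) = (cmod x * cmod z) ^ k / fact k"
      by (simp add: f_def norm_mult norm_power divide_inverse_commute)
    also have "\<dots> \<le> cmod x ^ k / fact k"
      using assms mult_left_le[of "cmod z" "cmod x"]
      by (intro divide_right_mono power_mono) auto
    finally show ?thesis
      by (simp add: g_def divide_inverse mult.commute)
  qed
  ultimately have "norm (exp (x * z) - (\<Sum>k<m. f k)) \<le> exp (cmod x) - (\<Sum>k<m. g k)"
    by (rule norm_sums_le)
  moreover have "(\<Sum>k<m. f k) = (\<Sum>k<m. x ^ k / fact k * z ^ k)"
    by (intro sum.cong refl) (simp add: f_def scaleR_conv_of_real power_mult_distrib field_simps)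
  moreover have "(\<Sum>k<m. g k) = (\<Sum>k<m. cmod x ^ k / fact k)"
    by (intro sum.cong refl) (simp add: g_def divide_inverse)
  ultimately show ?thesis
    by simp
qed

lemma norm_exp_mult_bounds:
  fixes x z :: complex
  assumes "cmod z \<le> 1"
  shows "exp (- cmod x) \<le> cmod (exp (x * z))" and "cmod (exp (x * z)) \<le> exp (cmod x)"
proof -
  have "\<bar>Re (x * z)\<bar> \<le> cmod x"
    using abs_Re_le_cmod[of "x * z"] assms mult_left_le[of "cmod z" "cmod x"]
    by (simp add: norm_mult)
  thus "exp (- cmod x) \<le> cmod (exp (x * z))" and "cmod (exp (x * z)) \<le> exp (cmod x)"
    unfolding norm_exp_eq_Re exp_le_cancel_iff by linarith+
qed

locale disc_nonvanishing_functional =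
  fixes L :: "complex poly \<Rightarrow> complex"
  assumes L_add: "L (p + q) = L p + L q"
    and L_smult: "L (smult a p) = a * L p"
    and L_one: "L 1 = 1"
    and L_nonzero: "\<lbrakk>\<delta> > 0; \<forall>z\<in>ball 0 1. \<delta> \<le> cmod (poly q z)\<rbrakk> \<Longrightarrow> L q \<noteq> 0"
begin

lemma L_const: "L [:c:] = c"
  using L_smult[of c 1] L_one by simp

lemma L_zero: "L 0 = 0"
  using L_const[of 0] by simp

lemma L_diff_const: "L (p - [:c:]) = L p - c"
proof -
  have "p - [:c:] = p + smult (-1) [:c:]"
    by simp
  thus ?thesis
    by (simp only: L_add L_smult L_const) simp
qed

lemma L_neq_if_bounded_away:
  assumes "\<delta> > 0" and "\<forall>z\<in>ball 0 1. \<delta> \<le> cmod (poly p z - c)"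
  shows "L p \<noteq> c"
  using L_nonzero[of \<delta> "p - [:c:]"] assms by (simp add: L_diff_const)

lemma norm_L_le:
  assumes "\<forall>z\<in>ball 0 1. cmod (poly p z) \<le> M"
  shows "cmod (L p) \<le> M"
proof (rule ccontr)
  assume "\<not> cmod (L p) \<le> M"
  moreover have "\<forall>z\<in>ball 0 1. cmod (L p) - M \<le> cmod (poly p z - L p)"
  proof
    fix z :: complex
    assume "z \<in> ball 0 1"
    with assms have "cmod (poly p z) \<le> M"
      by blast
    thus "cmod (L p) - M \<le> cmod (poly p z - L p)"
      using norm_triangle_ineq2[of "L p" "poly p z"] by (simp add: norm_minus_commute)
  qed
  ultimately show False
    using L_neq_if_bounded_away[of "cmod (L p) - M" p "L p"] by simp
qed

lemma norm_L_ge: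
  assumes "\<forall>z\<in>ball 0 1. m \<le> cmod (poly p z)"
  shows "m \<le> cmod (L p)"
proof (rule ccontr)
  assume "\<not> m \<le> cmod (L p)"
  moreover have "\<forall>z\<in>ball 0 1. m - cmod (L p) \<le> cmod (poly p z - L p)"
  proof
    fix z :: complex
    assume "z \<in> ball 0 1"
    with assms have "m \<le> cmod (poly p z)"
      by blast
    thus "m - cmod (L p) \<le> cmod (poly p z - L p)"
      using norm_triangle_ineq2[of "poly p z" "L p"] by simp
  qed
  ultimately show False
    using L_neq_if_bounded_away[of "m - cmod (L p)" p "L p"] by simp
qed

lemma L_sum_monom: "L (\<Sum>k\<in>A. monom (a k) k) = (\<Sum>k\<in>A. a k * L (monom 1 k))"
proof -
  have "L (\<Sum>k\<in>A. monom (a k) k) = (\<Sum>k\<in>A. L (monom (a k) k))"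
    by (simp add: sum_comp_morphism[of L, OF L_zero L_add, symmetric] o_def)
  also have "\<dots> = (\<Sum>k\<in>A. a k * L (monom 1 k))"
    using L_smult[of "a k" "monom 1 k" for k] by (simp add: smult_monom)
  finally show ?thesis .
qed

lemma norm_L_monom_le: "cmod (L (monom 1 k)) \<le> 1"
  by (rule norm_L_le) (simp add: poly_monom norm_power power_le_one)

definition moment_fps :: "complex fps" where
  "moment_fps = Abs_fps (\<lambda>k. L (monom 1 k) / fact k)"

definition moment_egf :: "complex \<Rightarrow> complex" where
  "moment_egf = eval_fps moment_fps"

lemma fps_conv_radius_moment_fps: "fps_conv_radius moment_fps = \<infinity>"
  unfolding fps_conv_radius_def
proof (rule conv_radius_inftyI'')
  fix x :: complex
  have "norm (fps_nth moment_fps k * x ^ k) \<le> cmod x ^ k /\<^sub>R fact k" for k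
  proof -
    have "norm (fps_nth moment_fps k * x ^ k) = cmod (L (monom 1 k)) * cmod x ^ k / fact k"
      by (simp add: moment_fps_def norm_mult norm_divide norm_power)
    also have "\<dots> \<le> 1 * cmod x ^ k / fact k"
      by (intro divide_right_mono mult_right_mono norm_L_monom_le) auto
    finally show ?thesis
      by (simp add: divide_inverse mult.commute)
  qed
  thus "summable (\<lambda>k. fps_nth moment_fps k * x ^ k)"
    by (rule summable_comparison_test'[OF summable_exp_generic, where N = 0])
qed

lemma moment_egf_sums: "(\<lambda>k. L (monom 1 k) / fact k * x ^ k) sums moment_egf x"
  using sums_eval_fps[of x moment_fps] fps_conv_radius_moment_fps
  by (simp add: moment_egf_def moment_fps_def)

lemma holomorphic_moment_egf: "moment_egf holomorphic_on UNIV"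
  unfolding moment_egf_def by (intro holomorphic_on_eval_fps) (simp add: fps_conv_radius_moment_fps)

lemma moment_egf_0: "moment_egf 0 = 1"
  using L_one by (simp add: moment_egf_def eval_fps_at_0 moment_fps_def monom_0 one_pCons)

lemma norm_L_exp_partial_sum_bounds:
  fixes x :: complex and m :: nat
  defines "E \<equiv> exp (cmod x) - (\<Sum>k<m. cmod x ^ k / fact k)"
  shows "exp (- cmod x) - E \<le> cmod (\<Sum>k<m. L (monom 1 k) / fact k * x ^ k)"
    and "cmod (\<Sum>k<m. L (monom 1 k) / fact k * x ^ k) \<le> exp (cmod x) + E"
proof -
  define p where "p = (\<Sum>k<m. monom (x ^ k / fact k) k)"
  have Lp: "L p = (\<Sum>k<m. L (monom 1 k) / fact k * x ^ k)"
    by (simp add: p_def L_sum_monom field_simps)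
  have close: "cmod (exp (x * z) - poly p z) \<le> E" if "z \<in> ball 0 1" for z
    using norm_exp_minus_partial_sum_le[of z x m] that
    by (simp add: p_def E_def poly_sum poly_monom)
  have "\<forall>z\<in>ball 0 1. cmod (poly p z) \<le> exp (cmod x) + E"
  proof
    fix z :: complex
    assume z: "z \<in> ball 0 1"
    have "cmod (poly p z) \<le> cmod (exp (x * z)) + cmod (exp (x * z) - poly p z)"
      using norm_triangle_sub[of "poly p z" "exp (x * z)"] by (simp add: norm_minus_commute)
    moreover have "cmod (exp (x * z)) \<le> exp (cmod x)"
      using z by (intro norm_exp_mult_bounds) simp
    ultimately show "cmod (poly p z) \<le> exp (cmod x) + E"
      using close[OF z] by linarith
  qed
  hence "cmod (L p) \<le> exp (cmod x) + E"
    by (rule norm_L_le)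
  moreover have "\<forall>z\<in>ball 0 1. exp (- cmod x) - E \<le> cmod (poly p z)"
  proof
    fix z :: complex
    assume z: "z \<in> ball 0 1"
    have "cmod (exp (x * z)) \<le> cmod (poly p z) + cmod (exp (x * z) - poly p z)"
      by (rule norm_triangle_sub)
    moreover have "exp (- cmod x) \<le> cmod (exp (x * z))"
      using z by (intro norm_exp_mult_bounds) simp
    ultimately show "exp (- cmod x) - E \<le> cmod (poly p z)"
      using close[OF z] by linarith
  qed
  hence "exp (- cmod x) - E \<le> cmod (L p)"
    by (rule norm_L_ge)
  ultimately show "exp (- cmod x) - E \<le> cmod (\<Sum>k<m. L (monom 1 k) / fact k * x ^ k)"
    and "cmod (\<Sum>k<m. L (monom 1 k) / fact k * x ^ k) \<le> exp (cmod x) + E"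
    by (simp_all only: Lp)
qed

lemma norm_moment_egf_bounds:
  shows "exp (- cmod x) \<le> cmod (moment_egf x)" and "cmod (moment_egf x) \<le> exp (cmod x)"
proof -
  define E where "E m = exp (cmod x) - (\<Sum>k<m. cmod x ^ k / fact k)" for m
  have partial_sums: "(\<lambda>m. cmod (\<Sum>k<m. L (monom 1 k) / fact k * x ^ k)) \<longlonglongrightarrow> cmod (moment_egf x)"
    using moment_egf_sums[of x] unfolding sums_def by (rule tendsto_norm)
  have "(\<lambda>m. \<Sum>k<m. cmod x ^ k / fact k) \<longlonglongrightarrow> exp (cmod x)"
    using exp_converges[of "cmod x"] by (simp add: sums_def divide_inverse mult.commute)
  hence "E \<longlonglongrightarrow> exp (cmod x) - exp (cmod x)"
    unfolding E_def by (intro tendsto_diff tendsto_const)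
  hence "E \<longlonglongrightarrow> 0"
    by simp
  hence "(\<lambda>m. exp (- cmod x) - E m) \<longlonglongrightarrow> exp (- cmod x)"
    and "(\<lambda>m. exp (cmod x) + E m) \<longlonglongrightarrow> exp (cmod x)"
    using tendsto_diff[OF tendsto_const] tendsto_add[OF tendsto_const] by fastforce+
  thus "exp (- cmod x) \<le> cmod (moment_egf x)" and "cmod (moment_egf x) \<le> exp (cmod x)"
    using norm_L_exp_partial_sum_bounds[of x] partial_sums
    by (auto intro: tendsto_le[OF trivial_limit_sequentially] simp: E_def)
qed

lemma L_monom_eq_power: "L (monom 1 k) = L [:0, 1:] ^ k"
proof -
  have "moment_egf x \<noteq> 0" for x
    using norm_moment_egf_bounds(1)[of x] by (auto simp del: exp_minus)
  then obtain b where b: "\<And>x. moment_egf x = exp (b * x)"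
    using entire_nonzero_exponential_type_eq_exp_linear[OF holomorphic_moment_egf moment_egf_0]
      norm_moment_egf_bounds(2) by blast
  have "moment_fps = fps_exp b"
    by (rule eval_fps_eqD) (simp_all add: fps_conv_radius_moment_fps b flip: moment_egf_def)
  hence moments: "L (monom 1 k) = b ^ k" for k
    using fps_nth_Abs_fps[of "\<lambda>k. L (monom 1 k) / fact k" k]
    by (simp add: moment_fps_def fps_exp_def)
  moreover have "[:0, 1:] = (monom 1 1 :: complex poly)"
    by (simp add: monom_Suc monom_0)
  ultimately show ?thesis
    by simp
qed

theorem L_eq_poly: "L p = poly p (L [:0, 1:])"
proof -
  have "L p = L (\<Sum>k\<le>degree p. monom (coeff p k) k)"
    by (simp only: poly_as_sum_of_monoms)
  also have "\<dots> = (\<Sum>k\<le>degree p. coeff p k * L [:0, 1:] ^ k)"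
    by (simp add: L_sum_monom L_monom_eq_power)
  also have "\<dots> = poly p (L [:0, 1:])"
    by (simp add: poly_altdef)
  finally show ?thesis .
qed

lemma L_identity_poly_in_ball:
  assumes circle: "\<And>w. cmod w = 1 \<Longrightarrow> L [:- w, 1:] \<noteq> 0"
  shows "L [:0, 1:] \<in> ball 0 1"
proof (rule ccontr)
  define w where "w = L [:0, 1:]"
  assume "L [:0, 1:] \<notin> ball 0 1"
  hence w: "cmod w \<ge> 1"
    by (simp add: w_def)
  have zero: "L [:- w, 1:] = 0"
    unfolding L_eq_poly[of "[:- w, 1:]"] by (simp add: w_def)
  show False
  proof (cases "cmod w = 1")
    case True
    with circle zero show False
      by blast
  next
    case False
    have "\<forall>u\<in>ball 0 1. cmod w - 1 \<le> cmod (poly [:- w, 1:] u)"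
    proof
      fix u :: complex
      assume "u \<in> ball 0 1"
      thus "cmod w - 1 \<le> cmod (poly [:- w, 1:] u)"
        using norm_triangle_ineq2[of w u] by (simp add: norm_minus_commute)
    qed
    with False w zero L_nonzero[of "cmod w - 1" "[:- w, 1:]"] show False
      by simp
  qed
qed

end

lemma nonvanishing_functional_eq_weighted_eval:
  fixes \<Lambda> :: "complex poly \<Rightarrow> complex"
  assumes add: "\<And>p q. \<Lambda> (p + q) = \<Lambda> p + \<Lambda> q"
    and smult: "\<And>a p. \<Lambda> (smult a p) = a * \<Lambda> p"
    and nonzero: "\<And>q \<delta>. \<lbrakk>\<delta> > 0; \<forall>z\<in>ball 0 1. \<delta> \<le> cmod (poly q z)\<rbrakk> \<Longrightarrow> \<Lambda> q \<noteq> 0"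
    and circle: "\<And>w. cmod w = 1 \<Longrightarrow> \<Lambda> [:- w, 1:] \<noteq> 0"
  shows "\<Lambda> 1 \<noteq> 0" and "\<Lambda> [:0, 1:] / \<Lambda> 1 \<in> ball 0 1"
    and "\<Lambda> p = \<Lambda> 1 * poly p (\<Lambda> [:0, 1:] / \<Lambda> 1)"
proof -
  show \<Lambda>1: "\<Lambda> 1 \<noteq> 0"
    by (rule nonzero[of 1]) auto
  interpret disc_nonvanishing_functional "\<lambda>p. \<Lambda> p / \<Lambda> 1"
    using \<Lambda>1 nonzero by unfold_locales (auto simp: add smult add_divide_distrib)
  show "\<Lambda> [:0, 1:] / \<Lambda> 1 \<in> ball 0 1"
    using L_identity_poly_in_ball circle \<Lambda>1 by simp
  show "\<Lambda> p = \<Lambda> 1 * poly p (\<Lambda> [:0, 1:] / \<Lambda> 1)"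
    using L_eq_poly[of p] \<Lambda>1 by (simp add: field_simps)
qed

section \<open>Operators on X\<close>

definition norm_continuous :: "(complex \<Rightarrow> complex) set \<Rightarrow> ((complex \<Rightarrow> complex) \<Rightarrow> real) \<Rightarrow>
    ((complex \<Rightarrow> complex) \<Rightarrow> complex) \<Rightarrow> bool"
  where "norm_continuous X N A \<longleftrightarrow>
    (\<forall>f\<in>X. \<forall>e>0. \<exists>d>0. \<forall>g\<in>X. N (\<lambda>z. g z - f z) < d \<longrightarrow> cmod (A g - A f) < e)"

lemma norm_continuous_cmult:
  assumes "norm_continuous X N A"
  shows "norm_continuous X N (\<lambda>f. c * A f)"
  unfolding norm_continuous_def
proof (intro ballI allI impI)
  fix f e
  assume "f \<in> X" and "(e::real) > 0"
  hence "e / (cmod c + 1) > 0"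
    by (simp add: add_nonneg_pos)
  then obtain d where "d > 0"
    and d: "\<forall>g\<in>X. N (\<lambda>z. g z - f z) < d \<longrightarrow> cmod (A g - A f) < e / (cmod c + 1)"
    using assms \<open>f \<in> X\<close> unfolding norm_continuous_def by blast
  moreover have "cmod (c * A g - c * A f) < e" if "cmod (A g - A f) < e / (cmod c + 1)" for g
  proof -
    have "cmod (c * A g - c * A f) = cmod c * cmod (A g - A f)"
      by (simp add: norm_mult flip: right_diff_distrib)
    also have "\<dots> \<le> (cmod c + 1) * cmod (A g - A f)"
      by (intro mult_right_mono) auto
    also have "\<dots> < e"
      using that pos_less_divide_eq[of "cmod c + 1"] by (simp add: add_nonneg_pos mult.commute)
    finally show ?thesis .
  qed
  ultimately show "\<exists>d>0. \<forall>g\<in>X. N (\<lambda>z. g z - f z) < d \<longrightarrow> cmod (c * A g - c * A f) < e"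
    by blast
qed

lemma banach_subspace_hol_norm_minus_commute:
  assumes "banach_subspace_hol X N" and "f \<in> X" and "g \<in> X"
  shows "N (\<lambda>z. g z - f z) = N (\<lambda>z. f z - g z)"
proof -
  have add: "\<forall>f\<in>X. \<forall>g\<in>X. (\<lambda>z. f z + g z) \<in> X"
    and scale: "\<forall>f\<in>X. \<forall>c. (\<lambda>z. c * f z) \<in> X"
    and norm_scale: "\<forall>f\<in>X. \<forall>c. N (\<lambda>z. c * f z) = cmod c * N f"
    using assms(1) unfolding banach_subspace_hol_def by blast+
  have "(\<lambda>z. (-1) * g z) \<in> X"
    using scale assms(3) by blast
  from add[rule_format, OF assms(2) this] have "(\<lambda>z. f z - g z) \<in> X"
    by simp
  from norm_scale[rule_format, OF this, of "-1"]
  have "N (\<lambda>z. (-1) * (f z - g z)) = N (\<lambda>z. f z - g z)"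
    by simp
  thus ?thesis
    by simp
qed

lemma norm_continuous_eq_on_dense:
  assumes banach: "banach_subspace_hol X N" and "D \<subseteq> X"
    and dense: "\<And>f e. f \<in> X \<Longrightarrow> e > 0 \<Longrightarrow> \<exists>g\<in>D. N (\<lambda>z. f z - g z) < e"
    and A: "norm_continuous X N A" and B: "norm_continuous X N B"
    and eq: "\<And>g. g \<in> D \<Longrightarrow> A g = B g" and f: "f \<in> X"
  shows "A f = B f"
proof (rule ccontr)
  assume "A f \<noteq> B f"
  hence e: "cmod (A f - B f) / 2 > 0"
    by simp
  obtain d1 where "d1 > 0"
    and d1: "\<forall>g\<in>X. N (\<lambda>z. g z - f z) < d1 \<longrightarrow> cmod (A g - A f) < cmod (A f - B f) / 2"
    using A f e unfolding norm_continuous_def by blast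
  obtain d2 where "d2 > 0"
    and d2: "\<forall>g\<in>X. N (\<lambda>z. g z - f z) < d2 \<longrightarrow> cmod (B g - B f) < cmod (A f - B f) / 2"
    using B f e unfolding norm_continuous_def by blast
  obtain g where "g \<in> D" and "N (\<lambda>z. f z - g z) < min d1 d2"
    using dense[OF f] \<open>d1 > 0\<close> \<open>d2 > 0\<close> by (metis min_less_iff_conj)
  hence g: "g \<in> X" "N (\<lambda>z. g z - f z) < min d1 d2"
    using \<open>D \<subseteq> X\<close> banach_subspace_hol_norm_minus_commute[OF banach f] by auto
  have "cmod (A f - B f) \<le> cmod (A g - A f) + cmod (B g - B f)"
    using norm_triangle_ineq4[of "A g - A f" "B g - B f"] eq[OF \<open>g \<in> D\<close>]
    by (simp add: norm_minus_commute)
  also have "\<dots> < cmod (A f - B f)"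
    using d1 d2 g by fastforce
  finally show False
    by simp
qed

lemma norm_continuous_at_point:
  assumes cont: "\<And>f K e. f \<in> X \<Longrightarrow> compact K \<Longrightarrow> K \<subseteq> S \<Longrightarrow> e > 0 \<Longrightarrow>
               \<exists>d>0. \<forall>g\<in>X. N (\<lambda>z. g z - f z) < d \<longrightarrow> (\<forall>z\<in>K. cmod (T g z - T f z) < e)"
    and z: "z \<in> S"
  shows "norm_continuous X N (\<lambda>f. T f z)"
  unfolding norm_continuous_def
proof (intro ballI allI impI)
  fix f and e :: real
  assume "f \<in> X" and "e > 0"
  with cont[OF \<open>f \<in> X\<close> compact_sing _ \<open>e > 0\<close>] z
  show "\<exists>d>0. \<forall>g\<in>X. N (\<lambda>z. g z - f z) < d \<longrightarrow> cmod (T g z - T f z) < e"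
    by simp
qed

lemma functional_eq_scaled_eval_if_eq_on_polys:
  assumes banach: "banach_subspace_hol X N"
    and polys: "\<And>p. restrD (poly p) \<in> X"
    and dense: "\<And>f e. f \<in> X \<Longrightarrow> e > 0 \<Longrightarrow> \<exists>p. N (\<lambda>z. f z - restrD (poly p) z) < e"
    and eval_cont: "norm_continuous X N (\<lambda>f. f w)" and w: "w \<in> ball 0 1"
    and cont: "norm_continuous X N \<Lambda>"
    and on_polys: "\<And>p. \<Lambda> (restrD (poly p)) = c * poly p w"
    and f: "f \<in> X"
  shows "\<Lambda> f = c * f w"
proof (rule norm_continuous_eq_on_dense[OF banach _ _ cont norm_continuous_cmult[OF eval_cont] _ f])
  show "range (\<lambda>p. restrD (poly p)) \<subseteq> X"
    using polys by blast
  show "\<exists>g\<in>range (\<lambda>p. restrD (poly p)). N (\<lambda>z. f z - g z) < e" if approx: "f \<in> X" "e > 0" for f e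
  proof -
    obtain p where "N (\<lambda>z. f z - restrD (poly p) z) < e"
      using dense[OF approx] by blast
    thus ?thesis
      by (intro bexI[of _ "restrD (poly p)"]) auto
  qed
  show "\<Lambda> g = c * g w" if "g \<in> range (\<lambda>p. restrD (poly p))" for g
    using that w on_polys by (auto simp: restrD_def)
qed

lemma restrD_poly_add: "restrD (poly (p + q)) = (\<lambda>z. restrD (poly p) z + restrD (poly q) z)"
  by (auto simp: restrD_def)

lemma restrD_poly_smult: "restrD (poly (smult a p)) = (\<lambda>z. a * restrD (poly p) z)"
  by (auto simp: restrD_def)

lemma restrD_minus_const: "restrD (\<lambda>z. z - w) = restrD (poly [:- w, 1:])"
  by (auto simp: restrD_def)

lemma INF_norm_restrD_poly_pos:
  assumes "\<delta> > 0" and "\<forall>z\<in>ball 0 1. \<delta> \<le> cmod (poly q z)"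
  shows "0 < (INF z\<in>ball 0 1. cmod (restrD (poly q) z))"
proof -
  have "\<delta> \<le> (INF z\<in>ball 0 1. cmod (restrD (poly q) z))"
    using assms(2) by (intro cINF_greatest) (auto simp: restrD_def)
  with assms(1) show ?thesis
    by linarith
qed

lemma bdd_above_norm_restrD_poly: "bdd_above ((\<lambda>z. cmod (restrD (poly q) z)) ` ball 0 1)"
proof -
  have "bounded (poly q ` cball 0 1)"
    by (intro compact_imp_bounded compact_continuous_image continuous_on_poly continuous_on_id compact_cball)
  then obtain B where "\<forall>y\<in>poly q ` cball 0 1. cmod y \<le> B"
    unfolding bounded_iff by blast
  thus ?thesis
    by (intro bdd_aboveI2[of _ _ B]) (auto simp: restrD_def)
qed

lemma nonvanishing_operator_eq_weighted_eval_on_polys: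
  assumes polys: "\<And>p. restrD (poly p) \<in> X"
    and Y1: "\<And>g. g \<in> X \<Longrightarrow> 0 < (INF z\<in>ball 0 1. cmod (g z)) \<Longrightarrow>
               bdd_above ((\<lambda>z. cmod (g z)) ` ball 0 1) \<Longrightarrow> g \<in> Y"
    and Y2: "\<And>w. cmod w = 1 \<Longrightarrow> restrD (\<lambda>u. u - w) \<in> Y"
    and add: "\<And>f g. f \<in> X \<Longrightarrow> g \<in> X \<Longrightarrow> T (\<lambda>u. f u + g u) z = T f z + T g z"
    and scale: "\<And>f c. f \<in> X \<Longrightarrow> T (\<lambda>u. c * f u) z = c * T f z"
    and nonzero: "\<And>g. g \<in> Y \<Longrightarrow> T g z \<noteq> 0"
  defines "\<Lambda> \<equiv> \<lambda>p. T (restrD (poly p)) z"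
  shows "\<Lambda> 1 \<noteq> 0" and "\<Lambda> [:0, 1:] / \<Lambda> 1 \<in> ball 0 1"
    and "\<Lambda> p = \<Lambda> 1 * poly p (\<Lambda> [:0, 1:] / \<Lambda> 1)"
proof -
  have "restrD (poly q) \<in> Y" if "\<delta> > 0" "\<forall>u\<in>ball 0 1. \<delta> \<le> cmod (poly q u)" for q \<delta>
    using that by (intro Y1 polys INF_norm_restrD_poly_pos bdd_above_norm_restrD_poly)
  hence "\<Lambda> q \<noteq> 0" if "\<delta> > 0" "\<forall>u\<in>ball 0 1. \<delta> \<le> cmod (poly q u)" for q \<delta>
    using that nonzero unfolding \<Lambda>_def by blast
  moreover have "\<Lambda> [:- w, 1:] \<noteq> 0" if "cmod w = 1" for w
    using nonzero[OF Y2[OF that]] unfolding \<Lambda>_def restrD_minus_const .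
  moreover have "\<Lambda> (p + q) = \<Lambda> p + \<Lambda> q" for p q
    using add[OF polys polys] unfolding \<Lambda>_def by (simp only: restrD_poly_add)
  moreover have "\<Lambda> (smult a p) = a * \<Lambda> p" for a p
    using scale[OF polys] unfolding \<Lambda>_def by (simp only: restrD_poly_smult)
  ultimately show "\<Lambda> 1 \<noteq> 0" and "\<Lambda> [:0, 1:] / \<Lambda> 1 \<in> ball 0 1"
    and "\<Lambda> p = \<Lambda> 1 * poly p (\<Lambda> [:0, 1:] / \<Lambda> 1)"
    using nonvanishing_functional_eq_weighted_eval[of \<Lambda>] by blast+
qed

theorem corollary7p2:
  fixes X Y :: "(complex \<Rightarrow> complex) set"
    and N :: "(complex \<Rightarrow> complex) \<Rightarrow> real"
    and T :: "(complex \<Rightarrow> complex) \<Rightarrow> (complex \<Rightarrow> complex)"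
  assumes banach: "banach_subspace_hol X N"
    and X1: "\<And>w f e. w \<in> ball 0 1 \<Longrightarrow> f \<in> X \<Longrightarrow> e > 0 \<Longrightarrow>
               \<exists>d>0. \<forall>g\<in>X. N (\<lambda>z. g z - f z) < d \<longrightarrow> cmod (g w - f w) < e"
    and X2_poly: "\<And>p :: complex poly. restrD (poly p) \<in> X"
    and X2_dense: "\<And>f e. f \<in> X \<Longrightarrow> e > 0 \<Longrightarrow>
               \<exists>p :: complex poly. N (\<lambda>z. f z - restrD (poly p) z) < e"
    and X3: "\<And>f. f \<in> X \<Longrightarrow> (\<lambda>z. z * f z) \<in> X"
    and Y_sub: "Y \<subseteq> X"
    and Y1: "\<And>g. g \<in> X \<Longrightarrow> 0 < (INF z\<in>ball 0 1. cmod (g z)) \<Longrightarrow>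
               bdd_above ((\<lambda>z. cmod (g z)) ` ball 0 1) \<Longrightarrow> g \<in> Y"
    and Y2: "\<And>l. cmod l = 1 \<Longrightarrow> restrD (\<lambda>z. z - l) \<in> Y"
    and T_hol: "\<And>f. f \<in> X \<Longrightarrow> T f holomorphic_on ball 0 1"
    and T_add: "\<And>f g z. f \<in> X \<Longrightarrow> g \<in> X \<Longrightarrow> z \<in> ball 0 1 \<Longrightarrow>
               T (\<lambda>w. f w + g w) z = T f z + T g z"
    and T_scale: "\<And>f c z. f \<in> X \<Longrightarrow> z \<in> ball 0 1 \<Longrightarrow>
               T (\<lambda>w. c * f w) z = c * T f z"
    and T_cont: "\<And>f K e. f \<in> X \<Longrightarrow> compact K \<Longrightarrow> K \<subseteq> ball 0 1 \<Longrightarrow> e > 0 \<Longrightarrow>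
               \<exists>d>0. \<forall>g\<in>X. N (\<lambda>z. g z - f z) < d \<longrightarrow> (\<forall>z\<in>K. cmod (T g z - T f z) < e)"
    and T_nonzero: "\<And>g z. g \<in> Y \<Longrightarrow> z \<in> ball 0 1 \<Longrightarrow> T g z \<noteq> 0"
  shows "\<exists>\<phi> \<psi>. \<phi> holomorphic_on ball 0 1 \<and> \<phi> ` ball 0 1 \<subseteq> ball 0 1 \<and>
            \<psi> holomorphic_on ball 0 1 \<and> (\<forall>z\<in>ball 0 1. \<psi> z \<noteq> 0) \<and>
            (\<forall>f\<in>X. \<forall>z\<in>ball 0 1. T f z = \<psi> z * f (\<phi> z))"
proof -
  define \<psi> where "\<psi> = T (restrD (poly 1))"
  define \<phi> where "\<phi> = (\<lambda>z. T (restrD (poly [:0, 1:])) z / \<psi> z)"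
  have pointwise: "\<psi> z \<noteq> 0 \<and> \<phi> z \<in> ball 0 1 \<and> (\<forall>p. T (restrD (poly p)) z = \<psi> z * poly p (\<phi> z))"
    if z: "z \<in> ball 0 1" for z
    unfolding \<psi>_def \<phi>_def
    by (intro conjI allI nonvanishing_operator_eq_weighted_eval_on_polys[where T = T and z = z,
          OF X2_poly Y1 Y2 T_add[OF _ _ z] T_scale[OF _ z] T_nonzero[OF _ z]])
  have composition: "T f z = \<psi> z * f (\<phi> z)" if "f \<in> X" and z: "z \<in> ball 0 1" for f z
  proof (rule functional_eq_scaled_eval_if_eq_on_polys[OF banach X2_poly X2_dense _ _ _ _ \<open>f \<in> X\<close>])
    show "\<phi> z \<in> ball 0 1" and "T (restrD (poly p)) z = \<psi> z * poly p (\<phi> z)" for p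
      using pointwise[OF z] by blast+
    thus "norm_continuous X N (\<lambda>f. f (\<phi> z))"
      unfolding norm_continuous_def using X1 by blast
    show "norm_continuous X N (\<lambda>f. T f z)"
      by (rule norm_continuous_at_point[OF T_cont z])
  qed
  have hol_\<psi>: "\<psi> holomorphic_on ball 0 1"
    unfolding \<psi>_def by (rule T_hol[OF X2_poly])
  have \<psi>_nonzero: "\<psi> z \<noteq> 0" and \<phi>_in_ball: "\<phi> z \<in> ball 0 1" if "z \<in> ball 0 1" for z
    using pointwise[OF that] by blast+
  have hol_\<phi>: "\<phi> holomorphic_on ball 0 1"
    unfolding \<phi>_def using \<psi>_nonzero by (intro holomorphic_intros T_hol[OF X2_poly] hol_\<psi>)
  show ?thesis
    by (intro exI[of _ \<phi>] exI[of _ \<psi>] conjI ballI image_subsetI hol_\<phi> hol_\<psi> \<psi>_nonzero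
        \<phi>_in_ball composition)
qed

end
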